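(* Let $\mathcal{C}$ be a covering of a finite set $E$ such that the distinct indiscernible neighborhoods $I(x_1),\dots,I(x_s)$ form a partition of $E$, and let $M(E,\mathcal{I}_{SH}(\mathcal{C}))$ be the matroid whose closure operator is $SH$. Then: (1) $X$ is a base of this matroid if and only if $|X\cap I(x_i)|=1$ for all $i\in\{1,\dots,s\}$; moreover the matroid has exactly $|I(x_1)||I(x_2)|\cdots|I(x_s)|$ bases. (2) For all $X\subseteq E$, its rank is $r_{SH}(X)=|\{I(x_i):I(x_i)\cap X\neq\emptyset,\ i=1,\dots,s\}|$. (3) $X$ is dependent if and only if there exists $i$ with $|I(x_i)\cap X|>1$. (4) $X$ is a circuit if and only if there exists $i$ with $X\subseteq I(x_i)$ and $|X|=2$.
   Context: A covering of $E$ is a family of nonempty subsets of $E$ with union $E$. $I(x)=\bigcup\{K\in\mathcal{C}:x\in K\}$ and $SH(X)=\bigcup\{K\in\mathcal{C}:K\cap X\neq\emptyset\}$. Under the partition hypothesis $SH$ is the closure operator of a matroid on $E$ with independent sets $\mathcal{I}_{SH}(\mathcal{C})=\{I\subseteq E:x\notin SH(I-\{x\})\ \forall x\in I\}$. A base is a maximal independent set, a circuit a minimal dependent set, and the rank of $X$ is the maximum size of an independent subset of $X$. *)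

theory Defs
  imports Main
begin

definition covering :: "'a set \<Rightarrow> 'a set set \<Rightarrow> bool" where
  "covering E C \<longleftrightarrow> (\<forall>K\<in>C. K \<noteq> {} \<and> K \<subseteq> E) \<and> \<Union>C = E"

definition indisc :: "'a set set \<Rightarrow> 'a \<Rightarrow> 'a set" where
  "indisc C x = \<Union>{K\<in>C. x \<in> K}"

definition SH :: "'a set set \<Rightarrow> 'a set \<Rightarrow> 'a set" where
  "SH C X = \<Union>{K\<in>C. K \<inter> X \<noteq> {}}"

definition partition_hyp :: "'a set \<Rightarrow> 'a set set \<Rightarrow> bool" where
  "partition_hyp E C \<longleftrightarrow>
     (\<forall>x\<in>E. \<forall>y\<in>E. indisc C x = indisc C y \<or> indisc C x \<inter> indisc C y = {})
     \<and> (\<forall>x\<in>E. indisc C x \<noteq> {}) \<and> \<Union>(indisc C ` E) = E"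

definition indep_SH :: "'a set \<Rightarrow> 'a set set \<Rightarrow> 'a set \<Rightarrow> bool" where
  "indep_SH E C I \<longleftrightarrow> I \<subseteq> E \<and> (\<forall>x\<in>I. x \<notin> SH C (I - {x}))"

definition base_SH :: "'a set \<Rightarrow> 'a set set \<Rightarrow> 'a set \<Rightarrow> bool" where
  "base_SH E C B \<longleftrightarrow> indep_SH E C B \<and> (\<forall>Y. indep_SH E C Y \<and> B \<subseteq> Y \<longrightarrow> Y = B)"

definition dep_SH :: "'a set \<Rightarrow> 'a set set \<Rightarrow> 'a set \<Rightarrow> bool" where
  "dep_SH E C X \<longleftrightarrow> X \<subseteq> E \<and> \<not> indep_SH E C X"

definition circuit_SH :: "'a set \<Rightarrow> 'a set set \<Rightarrow> 'a set \<Rightarrow> bool" where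
  "circuit_SH E C X \<longleftrightarrow> dep_SH E C X \<and> (\<forall>Y. Y \<subset> X \<longrightarrow> \<not> dep_SH E C Y)"

definition rank_SH :: "'a set \<Rightarrow> 'a set set \<Rightarrow> 'a set \<Rightarrow> nat" where
  "rank_SH E C X = Max {card Y | Y. Y \<subseteq> X \<and> indep_SH E C Y}"

end

theory Submission
  imports Defs "HOL-Library.FuncSet" "HOL-Library.Disjoint_Sets"
begin

(* Under the partition hypothesis, y lies in I(x) exactly when x and y lie in the same
   block I(z), and SH(X) is the union of the blocks meeting X. So a set is SH-independent
   iff it meets every block at most once: the matroid is the direct sum of rank-one
   uniform matroids on the blocks. Bases are then the transversals of the partition (one
   element per block, hence the product formula), the rank of X counts the blocks meeting
   X, and the circuits are the pairs inside a block. *)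

definition partial_transversal :: "'a set set \<Rightarrow> 'a set \<Rightarrow> bool" where
  "partial_transversal P X \<longleftrightarrow> (\<forall>N\<in>P. \<forall>x\<in>X \<inter> N. \<forall>y\<in>X \<inter> N. x = y)"

lemma partial_transversal_iff_card:
  "finite X \<Longrightarrow> partial_transversal P X \<longleftrightarrow> (\<forall>N\<in>P. card (X \<inter> N) \<le> 1)"
  by (auto simp: partial_transversal_def card_le_Suc0_iff_eq)

lemma partition_on_block_unique:
  "partition_on E P \<Longrightarrow> N \<in> P \<Longrightarrow> M \<in> P \<Longrightarrow> x \<in> N \<Longrightarrow> x \<in> M \<Longrightarrow> N = M"
  unfolding partition_on_def disjoint_def by blast

lemma partial_transversal_the_elem:
  assumes "partial_transversal P X" "N \<in> P" "x \<in> X \<inter> N"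
  shows "the_elem (X \<inter> N) = x"
proof -
  have "X \<inter> N = {x}"
    using assms unfolding partial_transversal_def by blast
  then show ?thesis
    by simp
qed

lemma transversal_imp_partial_transversal:
  "\<forall>N\<in>P. card (X \<inter> N) = 1 \<Longrightarrow> partial_transversal P X"
  unfolding partial_transversal_def by (metis card_1_singletonE singletonD)

lemma partial_transversal_insert:
  assumes "partition_on E P" "partial_transversal P X" "N \<in> P" "X \<inter> N = {}" "z \<in> N"
  shows "partial_transversal P (insert z X)"
  using assms partition_on_block_unique[OF assms(1)] unfolding partial_transversal_def by blast

lemma transversal_maximal:
  assumes "partition_on E P" "\<forall>N\<in>P. card (X \<inter> N) = 1"
    and "Y \<subseteq> E" "partial_transversal P Y" "X \<subseteq> Y"
  shows "Y = X"
proof -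
  have "y \<in> X" if "y \<in> Y" for y
  proof -
    obtain N where N: "N \<in> P" "y \<in> N"
      using assms(1,3) \<open>y \<in> Y\<close> by (auto simp: partition_on_def)
    then obtain x where "X \<inter> N = {x}"
      using assms(2) card_1_singletonE by metis
    with N that assms(4,5) show "y \<in> X"
      unfolding partial_transversal_def by blast
  qed
  with assms(5) show ?thesis by blast
qed

lemma card_transversals:
  assumes P: "partition_on E P" and "finite E"
  shows "card {X. X \<subseteq> E \<and> (\<forall>N\<in>P. card (X \<inter> N) = 1)} = (\<Prod>N\<in>P. card N)"
proof -
  let ?T = "{X. X \<subseteq> E \<and> (\<forall>N\<in>P. card (X \<inter> N) = 1)}"
  have image_Int_block: "f ` P \<inter> N = {f N}" if "f \<in> (\<Pi>\<^sub>E N\<in>P. N)" "N \<in> P" for f N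
  proof -
    have "f M \<in> M" if "M \<in> P" for M
      using PiE_mem[OF \<open>f \<in> _\<close> that] .
    then show ?thesis
      using that(2) partition_on_block_unique[OF P] by blast
  qed
  have singleton_Int_block: "X \<inter> N = {the_elem (X \<inter> N)}" if "X \<in> ?T" "N \<in> P" for X N
  proof -
    have "card (X \<inter> N) = 1" using that by blast
    then show ?thesis by (metis card_1_singletonE the_elem_eq)
  qed
  have "bij_betw (\<lambda>f. f ` P) (\<Pi>\<^sub>E N\<in>P. N) ?T"
  proof (rule bij_betw_byWitness[where f' = "\<lambda>X. \<lambda>N\<in>P. the_elem (X \<inter> N)"])
    show "\<forall>f\<in>\<Pi>\<^sub>E N\<in>P. N. (\<lambda>N\<in>P. the_elem (f ` P \<inter> N)) = f"
      using image_Int_block by (auto simp: PiE_iff extensional_def)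
    show "\<forall>X\<in>?T. (\<lambda>N\<in>P. the_elem (X \<inter> N)) ` P = X"
    proof
      fix X assume X: "X \<in> ?T"
      have "\<exists>N\<in>P. x \<in> N" if "x \<in> X" for x
        using X that P by (auto simp: partition_on_def)
      then show "(\<lambda>N\<in>P. the_elem (X \<inter> N)) ` P = X"
        using singleton_Int_block[OF X] by (auto simp: image_def) (metis IntI singletonD)
    qed
    show "(\<lambda>f. f ` P) ` (\<Pi>\<^sub>E N\<in>P. N) \<subseteq> ?T"
    proof (rule image_subsetI)
      fix f assume f: "f \<in> (\<Pi>\<^sub>E N\<in>P. N)"
      have "f ` P \<subseteq> E"
        using PiE_mem[OF f] partition_onD1[OF P] by blast
      then show "f ` P \<in> ?T"
        using image_Int_block[OF f] by simp
    qed
    show "(\<lambda>X. \<lambda>N\<in>P. the_elem (X \<inter> N)) ` ?T \<subseteq> (\<Pi>\<^sub>E N\<in>P. N)"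
    proof (rule image_subsetI)
      fix X assume X: "X \<in> ?T"
      have "the_elem (X \<inter> N) \<in> N" if "N \<in> P" for N
        using singleton_Int_block[OF X that] by (metis IntD2 singletonI)
      then show "(\<lambda>N\<in>P. the_elem (X \<inter> N)) \<in> (\<Pi>\<^sub>E N\<in>P. N)"
        by simp
    qed
  qed
  then have "card ?T = card (\<Pi>\<^sub>E N\<in>P. N)"
    by (simp add: bij_betw_same_card)
  also have "\<dots> = (\<Prod>N\<in>P. card N)"
    using finite_elements[OF \<open>finite E\<close> P] by (simp add: card_PiE)
  finally show ?thesis .
qed

lemma card_partial_transversal:
  assumes P: "partition_on E P" and "Y \<subseteq> E" "partial_transversal P Y"
  shows "card Y = card {N\<in>P. N \<inter> Y \<noteq> {}}"
proof -
  let ?B = "{N\<in>P. N \<inter> Y \<noteq> {}}"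
  let ?pick = "\<lambda>N. the_elem (Y \<inter> N)"
  have pick: "?pick N \<in> Y \<inter> N" if N: "N \<in> ?B" for N
  proof -
    obtain y where y: "y \<in> Y \<inter> N"
      using N by blast
    with N partial_transversal_the_elem[OF assms(3) _ y] show ?thesis
      by simp
  qed
  have inj: "inj_on ?pick ?B"
  proof (rule inj_onI)
    fix N M assume N: "N \<in> ?B" and M: "M \<in> ?B" and eq: "?pick N = ?pick M"
    have "?pick N \<in> N" "?pick N \<in> M"
      using pick[OF N] pick[OF M] unfolding eq by blast+
    with N M show "N = M"
      using partition_on_block_unique[OF P] by blast
  qed
  moreover have image: "?pick ` ?B = Y"
  proof (intro equalityI subsetI)
    fix y assume "y \<in> ?pick ` ?B"
    then obtain N where "N \<in> ?B" "y = ?pick N"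
      by (rule imageE)
    then show "y \<in> Y"
      using pick by blast
  next
    fix y assume "y \<in> Y"
    then obtain N where N: "N \<in> P" "y \<in> N"
      using assms(2) partition_onD1[OF P] by blast
    with \<open>y \<in> Y\<close> have "N \<in> ?B" "y = ?pick N"
      using partial_transversal_the_elem[OF assms(3) N(1)] by auto
    then show "y \<in> ?pick ` ?B"
      by (rule rev_image_eqI)
  qed
  ultimately show ?thesis
    using card_image[OF inj] image by simp
qed

lemma ex_partial_transversal_meeting_same_blocks:
  assumes P: "partition_on E P"
  obtains Y where "Y \<subseteq> X" "partial_transversal P Y"
    "{N\<in>P. N \<inter> Y \<noteq> {}} = {N\<in>P. N \<inter> X \<noteq> {}}"
proof
  let ?B = "{N\<in>P. N \<inter> X \<noteq> {}}"
  define pick where "pick N = (SOME x. x \<in> N \<inter> X)" for N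
  have pick: "pick N \<in> N \<inter> X" if "N \<in> ?B" for N
  proof -
    have "\<exists>x. x \<in> N \<inter> X"
      using that by blast
    then show ?thesis
      unfolding pick_def by (rule someI_ex)
  qed
  show "pick ` ?B \<subseteq> X"
    using pick by blast
  show "partial_transversal P (pick ` ?B)"
    unfolding partial_transversal_def
  proof (intro ballI)
    fix N x y assume "N \<in> P" "x \<in> pick ` ?B \<inter> N" "y \<in> pick ` ?B \<inter> N"
    then obtain Nx Ny where "Nx \<in> ?B" "x = pick Nx" "x \<in> N" "Ny \<in> ?B" "y = pick Ny" "y \<in> N"
      by blast
    with \<open>N \<in> P\<close> have "Nx = N" "Ny = N"
      using pick partition_on_block_unique[OF P] by (metis (no_types, lifting) IntD1 mem_Collect_eq)+
    with \<open>x = pick Nx\<close> \<open>y = pick Ny\<close> show "x = y"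
      by simp
  qed
  show "{N\<in>P. N \<inter> pick ` ?B \<noteq> {}} = ?B"
    using pick by blast
qed

lemma Max_card_partial_transversal:
  assumes P: "partition_on E P" and "finite E" "X \<subseteq> E"
  shows "Max {card Y | Y. Y \<subseteq> X \<and> partial_transversal P Y} = card {N\<in>P. N \<inter> X \<noteq> {}}"
proof (rule Max_eqI)
  have "finite X"
    using assms(2,3) finite_subset by blast
  then show "finite {card Y | Y. Y \<subseteq> X \<and> partial_transversal P Y}"
    by simp
  show "n \<le> card {N\<in>P. N \<inter> X \<noteq> {}}"
    if n: "n \<in> {card Y | Y. Y \<subseteq> X \<and> partial_transversal P Y}" for n
  proof -
    obtain Y where Y: "n = card Y" "Y \<subseteq> X" "partial_transversal P Y"
      using n by blast
    then have "n = card {N\<in>P. N \<inter> Y \<noteq> {}}"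
      using card_partial_transversal[OF P] assms(3) by blast
    also have "\<dots> \<le> card {N\<in>P. N \<inter> X \<noteq> {}}"
      using finite_elements[OF assms(2) P] Y(2) by (intro card_mono) auto
    finally show ?thesis .
  qed
  obtain Y where Y: "Y \<subseteq> X" "partial_transversal P Y"
    "{N\<in>P. N \<inter> Y \<noteq> {}} = {N\<in>P. N \<inter> X \<noteq> {}}"
    using ex_partial_transversal_meeting_same_blocks[OF P] .
  moreover have "Y \<subseteq> E"
    using Y(1) assms(3) by blast
  with Y have "card Y = card {N\<in>P. N \<inter> X \<noteq> {}}"
    using card_partial_transversal[OF P] by simp
  ultimately show "card {N\<in>P. N \<inter> X \<noteq> {}} \<in> {card Y | Y. Y \<subseteq> X \<and> partial_transversal P Y}"
    by auto
qed

lemma minimal_non_partial_transversal_iff: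
  assumes "finite X"
  shows "\<not> partial_transversal P X \<and> (\<forall>Y\<subset>X. partial_transversal P Y)
    \<longleftrightarrow> (\<exists>N\<in>P. X \<subseteq> N \<and> card X = 2)"
proof
  assume min: "\<not> partial_transversal P X \<and> (\<forall>Y\<subset>X. partial_transversal P Y)"
  then obtain N x y where "N \<in> P" "x \<in> X \<inter> N" "y \<in> X \<inter> N" "x \<noteq> y"
    unfolding partial_transversal_def by blast
  moreover from this have "\<not> partial_transversal P {x, y}"
    unfolding partial_transversal_def by blast
  with min have "\<not> {x, y} \<subset> X"
    by blast
  ultimately have "X = {x, y}"
    by blast
  with \<open>N \<in> P\<close> \<open>x \<in> X \<inter> N\<close> \<open>y \<in> X \<inter> N\<close> \<open>x \<noteq> y\<close>
  show "\<exists>N\<in>P. X \<subseteq> N \<and> card X = 2"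
    by auto
next
  assume "\<exists>N\<in>P. X \<subseteq> N \<and> card X = 2"
  then obtain N x y where "N \<in> P" "X \<subseteq> N" "X = {x, y}" "x \<noteq> y"
    by (meson card_2_iff)
  then have "\<not> partial_transversal P X"
    unfolding partial_transversal_def by blast
  moreover have "partial_transversal P Y" if "Y \<subset> X" for Y
  proof -
    have "card Y \<le> 1"
      using psubset_card_mono[OF assms that] \<open>X = {x, y}\<close> \<open>x \<noteq> y\<close> by simp
    then show ?thesis
      using finite_subset[OF psubset_imp_subset[OF that] assms]
      unfolding partial_transversal_def by (auto simp: card_le_Suc0_iff_eq)
  qed
  ultimately show "\<not> partial_transversal P X \<and> (\<forall>Y\<subset>X. partial_transversal P Y)"
    by blast
qed

lemma mem_indisc_sym: "x \<in> indisc C y \<longleftrightarrow> y \<in> indisc C x"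
  unfolding indisc_def by blast

lemma SH_eq_UN_indisc: "SH C X = (\<Union>x\<in>X. indisc C x)"
  unfolding SH_def indisc_def by blast

lemma partition_on_indisc:
  "partition_hyp E C \<Longrightarrow> partition_on E (indisc C ` E)"
  unfolding partition_hyp_def partition_on_def disjoint_def by auto

lemma indisc_self:
  "partition_hyp E C \<Longrightarrow> x \<in> E \<Longrightarrow> x \<in> indisc C x"
  unfolding partition_hyp_def indisc_def by blast

lemma indep_SH_iff:
  assumes "partition_hyp E C"
  shows "indep_SH E C I \<longleftrightarrow> I \<subseteq> E \<and> partial_transversal (indisc C ` E) I"
proof (cases "I \<subseteq> E")
  case False
  then show ?thesis
    unfolding indep_SH_def by blast
next
  case True
  let ?P = "indisc C ` E"
  have same_block: "y \<in> indisc C x \<longleftrightarrow> (\<exists>N\<in>?P. x \<in> N \<and> y \<in> N)"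
    if "x \<in> E" for x y
  proof
    assume "y \<in> indisc C x"
    with that show "\<exists>N\<in>?P. x \<in> N \<and> y \<in> N"
      using indisc_self[OF assms that] by blast
  next
    assume "\<exists>N\<in>?P. x \<in> N \<and> y \<in> N"
    then obtain N where "N \<in> ?P" "x \<in> N" "y \<in> N"
      by blast
    moreover have "indisc C x \<in> ?P" "x \<in> indisc C x"
      using that indisc_self[OF assms that] by simp_all
    ultimately show "y \<in> indisc C x"
      using partition_on_block_unique[OF partition_on_indisc[OF assms]] by blast
  qed
  have "x \<in> SH C (I - {x}) \<longleftrightarrow> (\<exists>y\<in>I - {x}. \<exists>N\<in>?P. x \<in> N \<and> y \<in> N)"
    if "x \<in> I" for x
  proof -
    have "x \<in> E"
      using True that by blast
    have "x \<in> SH C (I - {x}) \<longleftrightarrow> (\<exists>y\<in>I - {x}. y \<in> indisc C x)"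
      unfolding SH_eq_UN_indisc UN_iff mem_indisc_sym[of x] ..
    also have "\<dots> \<longleftrightarrow> (\<exists>y\<in>I - {x}. \<exists>N\<in>?P. x \<in> N \<and> y \<in> N)"
      by (simp only: same_block[OF \<open>x \<in> E\<close>])
    finally show ?thesis .
  qed
  with True show ?thesis
    unfolding indep_SH_def partial_transversal_def by blast
qed

lemma base_SH_iff:
  assumes hyp: "partition_hyp E C" and "X \<subseteq> E"
  shows "base_SH E C X \<longleftrightarrow> (\<forall>N\<in>indisc C ` E. card (X \<inter> N) = 1)"
proof
  let ?P = "indisc C ` E"
  have P: "partition_on E ?P"
    using partition_on_indisc[OF hyp] .
  assume "base_SH E C X"
  then have pt: "partial_transversal ?P X"
    and max: "\<And>Y. Y \<subseteq> E \<Longrightarrow> partial_transversal ?P Y \<Longrightarrow> X \<subseteq> Y \<Longrightarrow> Y = X"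
    unfolding base_SH_def indep_SH_iff[OF hyp] by blast+
  show "\<forall>N\<in>?P. card (X \<inter> N) = 1"
  proof
    fix N assume N: "N \<in> ?P"
    have "X \<inter> N \<noteq> {}"
    proof
      assume disj: "X \<inter> N = {}"
      obtain z where z: "z \<in> N"
        using N partition_onD3[OF P] by blast
      have "insert z X \<subseteq> E"
        using z N partition_onD1[OF P] assms(2) by blast
      then have "insert z X = X"
        using max partial_transversal_insert[OF P pt N disj z] by blast
      with z disj show False
        by blast
    qed
    then obtain x where "x \<in> X \<inter> N"
      by blast
    with pt N have "X \<inter> N = {x}"
      unfolding partial_transversal_def by blast
    then show "card (X \<inter> N) = 1"
      by simp
  qed
next
  assume "\<forall>N\<in>indisc C ` E. card (X \<inter> N) = 1"
  then show "base_SH E C X"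
    unfolding base_SH_def indep_SH_iff[OF hyp]
    using transversal_imp_partial_transversal transversal_maximal[OF partition_on_indisc[OF hyp]]
      assms(2) by blast
qed

lemma card_base_SH:
  assumes "finite E" "partition_hyp E C"
  shows "card {X. base_SH E C X} = (\<Prod>N\<in>indisc C ` E. card N)"
proof -
  have "base_SH E C X \<longleftrightarrow> X \<subseteq> E \<and> (\<forall>N\<in>indisc C ` E. card (X \<inter> N) = 1)" for X
  proof (cases "X \<subseteq> E")
    case True
    then show ?thesis
      using base_SH_iff[OF assms(2) True] by simp
  next
    case False
    then show ?thesis
      unfolding base_SH_def indep_SH_def by blast
  qed
  then show ?thesis
    using card_transversals[OF partition_on_indisc[OF assms(2)] assms(1)] by simp
qed

lemma rank_SH_eq:
  assumes "finite E" "partition_hyp E C" "X \<subseteq> E"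
  shows "rank_SH E C X = card {N\<in>indisc C ` E. N \<inter> X \<noteq> {}}"
proof -
  have "{card Y | Y. Y \<subseteq> X \<and> indep_SH E C Y}
      = {card Y | Y. Y \<subseteq> X \<and> partial_transversal (indisc C ` E) Y}"
    unfolding indep_SH_iff[OF assms(2)] using assms(3) by blast
  then show ?thesis
    unfolding rank_SH_def
    using Max_card_partial_transversal[OF partition_on_indisc[OF assms(2)] assms(1,3)] by simp
qed

lemma dep_SH_iff:
  assumes "finite E" "partition_hyp E C" "X \<subseteq> E"
  shows "dep_SH E C X \<longleftrightarrow> (\<exists>N\<in>indisc C ` E. card (N \<inter> X) > 1)"
proof -
  have "finite X"
    using assms(1,3) finite_subset by blast
  then show ?thesis
    unfolding dep_SH_def indep_SH_iff[OF assms(2)] partial_transversal_iff_card[OF \<open>finite X\<close>]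
    using assms(3) by (auto simp: Int_commute not_le)
qed

lemma circuit_SH_iff:
  assumes "finite E" "partition_hyp E C" "X \<subseteq> E"
  shows "circuit_SH E C X \<longleftrightarrow> (\<exists>N\<in>indisc C ` E. X \<subseteq> N \<and> card X = 2)"
proof -
  let ?P = "indisc C ` E"
  have "finite X"
    using assms(1,3) finite_subset by blast
  have "circuit_SH E C X \<longleftrightarrow> \<not> partial_transversal ?P X \<and> (\<forall>Y\<subset>X. partial_transversal ?P Y)"
    unfolding circuit_SH_def dep_SH_def indep_SH_iff[OF assms(2)] using assms(3) by blast
  then show ?thesis
    using minimal_non_partial_transversal_iff[OF \<open>finite X\<close>] by simp
qed

theorem proposition12:
  fixes E :: "'a set" and C :: "'a set set"
  assumes "finite E" and "covering E C" and "partition_hyp E C"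
  shows "(\<forall>X. X \<subseteq> E \<longrightarrow>
            (base_SH E C X \<longleftrightarrow> (\<forall>N\<in>indisc C ` E. card (X \<inter> N) = 1)))
       \<and> card {X. base_SH E C X} = (\<Prod>N\<in>indisc C ` E. card N)
       \<and> (\<forall>X. X \<subseteq> E \<longrightarrow>
            rank_SH E C X = card {N\<in>indisc C ` E. N \<inter> X \<noteq> {}})
       \<and> (\<forall>X. X \<subseteq> E \<longrightarrow>
            (dep_SH E C X \<longleftrightarrow> (\<exists>N\<in>indisc C ` E. card (N \<inter> X) > 1)))
       \<and> (\<forall>X. X \<subseteq> E \<longrightarrow>
            (circuit_SH E C X \<longleftrightarrow> (\<exists>N\<in>indisc C ` E. X \<subseteq> N \<and> card X = 2)))"
  using base_SH_iff[OF assms(3)] card_base_SH[OF assms(1,3)] rank_SH_eq[OF assms(1,3)]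
    dep_SH_iff[OF assms(1,3)] circuit_SH_iff[OF assms(1,3)] by blast

end
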